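(* Let $M=([n],\mathscr C)$ be a matroid. Then $M$ has a unique minimal tropical basis if and only if $B_M$ is a tropical basis.
   Context: Let ${\bf TP}^{n-1}$ be the tropical projective space over $(\mathbb R\cup\{-\infty\},\max,+)$. For a circuit $C$, $V(C)$ is the set of $x\in{\bf TP}^{n-1}$ such that $\max\{x_i:i\in C\}$ is attained at least twice. For $B\subseteq\mathscr C$, set $V(B)=\bigcap_{C\in B}V(C)$. A subset $B\subseteq\mathscr C$ is a tropical basis if $V(B)=V(\mathscr C)$. It is a minimal tropical basis if no proper subset of it is a tropical basis. $B_M$ denotes the intersection of all tropical bases of $M$. *)

theory Defs
  imports Main "HOL-Library.Extended_Real"
begin

definition matroid_circuits :: "nat \<Rightarrow> nat set set \<Rightarrow> bool" where
  "matroid_circuits n \<C> \<longleftrightarrow>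
     (\<forall>C\<in>\<C>. C \<subseteq> {1..n}) \<and>
     {} \<notin> \<C> \<and>
     (\<forall>C1\<in>\<C>. \<forall>C2\<in>\<C>. C1 \<subseteq> C2 \<longrightarrow> C1 = C2) \<and>
     (\<forall>C1\<in>\<C>. \<forall>C2\<in>\<C>. \<forall>e. C1 \<noteq> C2 \<and> e \<in> C1 \<inter> C2 \<longrightarrow>
        (\<exists>C3\<in>\<C>. C3 \<subseteq> (C1 \<union> C2) - {e}))"

text \<open>Representatives of points of TP^{n-1}: vectors indexed by {1..n} with entries in
  R \<union> {-\<infinity>}, not all -\<infinity> (other coordinates fixed to -\<infinity>).  All sets V(C) are
  invariant under tropical scaling, so working with representatives is harmless.\<close>
definition TP :: "nat \<Rightarrow> (nat \<Rightarrow> ereal) set" where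
  "TP n = {x. (\<forall>i. x i \<noteq> \<infinity>) \<and> (\<forall>i. i \<notin> {1..n} \<longrightarrow> x i = -\<infinity>) \<and>
             (\<exists>i\<in>{1..n}. x i \<noteq> -\<infinity>)}"

definition tropV :: "nat \<Rightarrow> nat set \<Rightarrow> (nat \<Rightarrow> ereal) set" where
  "tropV n C = {x \<in> TP n. \<exists>i\<in>C. \<exists>j\<in>C. i \<noteq> j \<and>
                   x i = Max (x ` C) \<and> x j = Max (x ` C)}"

definition tropVset :: "nat \<Rightarrow> nat set set \<Rightarrow> (nat \<Rightarrow> ereal) set" where
  "tropVset n B = TP n \<inter> (\<Inter>C\<in>B. tropV n C)"

definition tropical_basis :: "nat \<Rightarrow> nat set set \<Rightarrow> nat set set \<Rightarrow> bool" where
  "tropical_basis n \<C> B \<longleftrightarrow> B \<subseteq> \<C> \<and> tropVset n B = tropVset n \<C>"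

definition minimal_tropical_basis :: "nat \<Rightarrow> nat set set \<Rightarrow> nat set set \<Rightarrow> bool" where
  "minimal_tropical_basis n \<C> B \<longleftrightarrow> tropical_basis n \<C> B \<and>
     (\<forall>B'. B' \<subset> B \<longrightarrow> \<not> tropical_basis n \<C> B')"

text \<open>B_M: intersection of all tropical bases (a nonempty family, since \<C> itself is one).\<close>
definition BM :: "nat \<Rightarrow> nat set set \<Rightarrow> nat set set" where
  "BM n \<C> = \<Inter>{B. tropical_basis n \<C> B}"

end

theory Submission
  imports Defs
begin

text \<open>Only finiteness matters: every tropical basis is a subset of the finite set of circuits,
  so every tropical basis contains a minimal one.  Hence a unique minimal tropical basis lies
  inside every tropical basis, i.e. inside \<open>B_M\<close>, and so equals \<open>B_M\<close>; conversely, if \<open>B_M\<close>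
  is a tropical basis it is contained in all others and is therefore the only minimal one.\<close>

lemma ex_minimal_subset:
  assumes "finite B" "P B"
  shows "\<exists>B'\<subseteq>B. P B' \<and> (\<forall>B''. B'' \<subset> B' \<longrightarrow> \<not> P B'')"
proof -
  let ?S = "{B'. B' \<subseteq> B \<and> P B'}"
  have "finite ?S" "B \<in> ?S"
    using assms by simp_all
  then obtain B' where "B' \<in> ?S"
    and "\<forall>B''\<in>?S. B'' \<le> B' \<longrightarrow> B' = B''"
    by (meson finite_has_minimal2)
  then show ?thesis
    by (metis (no_types, lifting) mem_Collect_eq order.trans psubset_eq)
qed

lemma ex1_minimal_iff_Inter:
  fixes P :: "'a set \<Rightarrow> bool"
  assumes "\<And>B. P B \<Longrightarrow> finite B"
  shows "(\<exists>!B. P B \<and> (\<forall>B'. B' \<subset> B \<longrightarrow> \<not> P B')) \<longleftrightarrow> P (\<Inter>{B. P B})"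
proof
  assume "\<exists>!B. P B \<and> (\<forall>B'. B' \<subset> B \<longrightarrow> \<not> P B')"
  then obtain B0 where "P B0"
    and unique: "\<And>B. P B \<Longrightarrow> \<forall>B'. B' \<subset> B \<longrightarrow> \<not> P B' \<Longrightarrow> B = B0"
    by metis
  have "B0 \<subseteq> B" if "P B" for B
    using ex_minimal_subset[of B P, OF assms[OF that] that] unique by metis
  with \<open>P B0\<close> have "\<Inter>{B. P B} = B0"
    by (intro subset_antisym Inter_greatest Inter_lower) auto
  with \<open>P B0\<close> show "P (\<Inter>{B. P B})"
    by simp
next
  assume Inter: "P (\<Inter>{B. P B})"
  show "\<exists>!B. P B \<and> (\<forall>B'. B' \<subset> B \<longrightarrow> \<not> P B')"
  proof (rule ex1I)
    show "P (\<Inter>{B. P B}) \<and> (\<forall>B'. B' \<subset> \<Inter>{B. P B} \<longrightarrow> \<not> P B')"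
      using Inter by (auto dest: Inter_lower[of _ "{B. P B}", simplified] simp: psubset_eq)
  next
    fix B assume B: "P B \<and> (\<forall>B'. B' \<subset> B \<longrightarrow> \<not> P B')"
    then have "\<Inter>{B. P B} \<subseteq> B"
      by blast
    with B Inter show "B = \<Inter>{B. P B}"
      by blast
  qed
qed

lemma finite_circuits:
  assumes "matroid_circuits n \<C>"
  shows "finite \<C>"
proof -
  have "\<C> \<subseteq> Pow {1..n}"
    using assms by (auto simp: matroid_circuits_def)
  then show ?thesis
    by (rule finite_subset) simp
qed

theorem lemma2:
  fixes n :: nat and \<C> :: "nat set set"
  assumes "matroid_circuits n \<C>"
  shows "(\<exists>!B. minimal_tropical_basis n \<C> B) \<longleftrightarrow> tropical_basis n \<C> (BM n \<C>)"
proof -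
  have "finite B" if "tropical_basis n \<C> B" for B
    using that finite_circuits[OF assms] finite_subset by (auto simp: tropical_basis_def)
  then show ?thesis
    unfolding minimal_tropical_basis_def BM_def by (rule ex1_minimal_iff_Inter)
qed

end
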